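(* Let $\mathcal{G}$ be a class of graphs that is closed under removing edges (if $G\in\mathcal{G}$, then every graph obtained from $G$ by deleting edges, keeping all vertices, is in $\mathcal{G}$). Let $c$ be a constant, let $f(x)=cx$, and let $g$ be an arbitrary function. Suppose that every graph $G\in\mathcal{G}$ with $n$ vertices and $m$ edges satisfies $cr(G)\geq f(m)-g(n)$. Then for every positive integer $k$, every graph $G\in\mathcal{G}$ with $n$ vertices and $m$ edges satisfies $$cr_k(G)\geq f(m)-k\cdot g(n).$$
   Context: $cr(G)$ denotes the minimum number of edge crossings over all (simple) drawings of $G$ in the plane, where in a simple drawing no two edges cross more than once and no three edges cross at a point. For a positive integer $k$, the $k$-planar crossing number $cr_k(G)$ of $G=(V,E)$ is the minimum of $cr(G_1)+\cdots+cr(G_k)$ over all decompositions of $G$ into $k$ subgraphs $G_i=(V,E_i)$ with $E=E_1\cup\dots\cup E_k$ and the $E_i$ pairwise disjoint. *)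

theory Defs
  imports "HOL-Analysis.Analysis"
begin

definition simple_graph :: "'a set \<Rightarrow> 'a set set \<Rightarrow> bool" where
  "simple_graph V E \<longleftrightarrow> finite V \<and>
     (\<forall>e\<in>E. \<exists>u v. e = {u, v} \<and> u \<noteq> v \<and> u \<in> V \<and> v \<in> V)"

definition edge_interior :: "('a \<Rightarrow> complex) \<Rightarrow> ('a set \<Rightarrow> real \<Rightarrow> complex) \<Rightarrow> 'a set \<Rightarrow> complex set" where
  "edge_interior pos D e = path_image (D e) - pos ` e"

text \<open>A simple drawing of (V,E) in the plane (identified with complex): vertices are
  distinct points, edges are arcs between the images of their endpoints passing through no
  other vertex; any two edges share at most one interior point (cross at most once) and no
  three edges share an interior point.\<close>
definition simple_drawing :: "'a set \<Rightarrow> 'a set set \<Rightarrow> ('a \<Rightarrow> complex) \<Rightarrow> ('a set \<Rightarrow> real \<Rightarrow> complex) \<Rightarrow> bool" where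
  "simple_drawing V E pos D \<longleftrightarrow>
     inj_on pos V \<and>
     (\<forall>e\<in>E. \<exists>u v. e = {u, v} \<and> arc (D e) \<and> pathstart (D e) = pos u \<and> pathfinish (D e) = pos v
                 \<and> path_image (D e) \<inter> pos ` V = {pos u, pos v}) \<and>
     (\<forall>e\<in>E. \<forall>e'\<in>E. e \<noteq> e' \<longrightarrow>
         finite (edge_interior pos D e \<inter> edge_interior pos D e') \<and>
         card (edge_interior pos D e \<inter> edge_interior pos D e') \<le> 1) \<and>
     (\<forall>e\<in>E. \<forall>e'\<in>E. \<forall>e''\<in>E. e \<noteq> e' \<and> e \<noteq> e'' \<and> e' \<noteq> e'' \<longrightarrow>
         edge_interior pos D e \<inter> edge_interior pos D e' \<inter> edge_interior pos D e'' = {})"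

definition crossings :: "'a set set \<Rightarrow> ('a \<Rightarrow> complex) \<Rightarrow> ('a set \<Rightarrow> real \<Rightarrow> complex) \<Rightarrow> nat" where
  "crossings E pos D = card {({e, e'}, p) | e e' p. e \<in> E \<and> e' \<in> E \<and> e \<noteq> e' \<and>
       p \<in> edge_interior pos D e \<inter> edge_interior pos D e'}"

definition cr :: "'a set \<Rightarrow> 'a set set \<Rightarrow> nat" where
  "cr V E = (LEAST n. \<exists>pos D. simple_drawing V E pos D \<and> crossings E pos D = n)"

text \<open>k-planar crossing number: minimum over decompositions E = E_0 \<union> ... \<union> E_(k-1)
  (pairwise disjoint, given by an assignment of each edge to an index < k).\<close>
definition cr_k :: "nat \<Rightarrow> 'a set \<Rightarrow> 'a set set \<Rightarrow> nat" where
  "cr_k k V E = (LEAST n. \<exists>part :: 'a set \<Rightarrow> nat. (\<forall>e\<in>E. part e < k) \<and>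
       n = (\<Sum>i<k. cr V {e\<in>E. part e = i}))"

end

theory Submission
  imports Defs
begin

text \<open>Take a decomposition attaining \<open>cr\<^sub>k(G)\<close>. Every part is a spanning subgraph of \<open>G\<close>,
  hence in the class, so its crossing number is at least \<open>c m\<^sub>i - g(n)\<close>. Summing over the
  \<open>k\<close> parts and using \<open>\<Sum> m\<^sub>i = m\<close>, which is where the linearity of \<open>f\<close> enters, gives
  \<open>cr\<^sub>k(G) \<ge> c m - k g(n)\<close>.\<close>

lemma simple_graph_finite_edges:
  assumes "simple_graph V E"
  shows "finite E"
proof -
  have "E \<subseteq> Pow V"
    using assms unfolding simple_graph_def by fastforce
  moreover have "finite V"
    using assms unfolding simple_graph_def by simp
  ultimately show ?thesis
    by (meson finite_Pow_iff finite_subset)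
qed

lemma cr_k_attained:
  assumes "k > 0"
  obtains part :: "'a set \<Rightarrow> nat"
  where "\<forall>e\<in>E. part e < k" and "cr_k k V E = (\<Sum>i<k. cr V {e\<in>E. part e = i})"
proof -
  let ?P = "\<lambda>n. \<exists>part :: 'a set \<Rightarrow> nat. (\<forall>e\<in>E. part e < k) \<and>
       n = (\<Sum>i<k. cr V {e\<in>E. part e = i})"
  have "?P (\<Sum>i<k. cr V {e\<in>E. (\<lambda>_. 0::nat) e = i})"
    using assms by (intro exI[of _ "\<lambda>_. 0"]) simp
  then have "?P (Least ?P)"
    by (rule LeastI)
  then show ?thesis
    using that unfolding cr_k_def by blast
qed

lemma card_eq_sum_card_parts:
  fixes part :: "'a \<Rightarrow> nat"
  assumes "finite E" and "\<forall>e\<in>E. part e < k"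
  shows "card E = (\<Sum>i<k. card {e\<in>E. part e = i})"
proof -
  have "part ` E \<subseteq> {..<k}"
    using assms(2) by auto
  from sum.group[OF assms(1) finite_lessThan this, where h = "\<lambda>_. 1 :: nat"]
  show ?thesis
    by simp
qed

theorem lemma2:
  fixes \<G> :: "('a set \<times> 'a set set) set" and c :: real and g :: "nat \<Rightarrow> real" and k :: nat
  assumes graphs: "\<forall>V E. (V, E) \<in> \<G> \<longrightarrow> simple_graph V E"
    and closed: "\<forall>V E E'. (V, E) \<in> \<G> \<longrightarrow> E' \<subseteq> E \<longrightarrow> (V, E') \<in> \<G>"
    and hyp: "\<forall>V E. (V, E) \<in> \<G> \<longrightarrow> real (cr V E) \<ge> c * real (card E) - g (card V)"
    and kpos: "k > 0"
  shows "\<forall>V E. (V, E) \<in> \<G> \<longrightarrow>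
           real (cr_k k V E) \<ge> c * real (card E) - real k * g (card V)"
proof (intro allI impI)
  fix V E assume G: "(V, E) \<in> \<G>"
  obtain part where part: "\<forall>e\<in>E. part e < k"
    and cr_k_eq: "cr_k k V E = (\<Sum>i<k. cr V {e\<in>E. part e = i})"
    using kpos by (rule cr_k_attained)
  have simple: "simple_graph V E"
    using graphs G by blast
  have card_E: "card E = (\<Sum>i<k. card {e\<in>E. part e = i})"
    by (rule card_eq_sum_card_parts[OF simple_graph_finite_edges[OF simple] part])
  have part_bound: "c * real (card {e\<in>E. part e = i}) - g (card V)
      \<le> real (cr V {e\<in>E. part e = i})" for i
  proof -
    have "(V, {e\<in>E. part e = i}) \<in> \<G>"
      by (rule closed[rule_format, OF G]) blast
    then show ?thesis
      by (rule hyp[rule_format])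
  qed
  have "c * real (card E) - real k * g (card V)
      = c * real (\<Sum>i<k. card {e\<in>E. part e = i}) - real k * g (card V)"
    by (simp only: card_E)
  also have "\<dots> = (\<Sum>i<k. c * real (card {e\<in>E. part e = i}) - g (card V))"
    by (simp add: sum_subtractf sum_distrib_left)
  also have "\<dots> \<le> (\<Sum>i<k. real (cr V {e\<in>E. part e = i}))"
    by (rule sum_mono) (rule part_bound)
  also have "\<dots> = real (cr_k k V E)"
    by (simp add: cr_k_eq)
  finally show "real (cr_k k V E) \<ge> c * real (card E) - real k * g (card V)" .
qed

end
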